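(* Let $R$ be a commutative ring with identity. The power series ring $R[[x]]$ is complemented if and only if $R$ is reduced and for each countably generated ideal $I$ of $R$ there is a countably generated ideal $J$ of $R$ such that $IJ=0$ and $I+J$ is a dense ideal of $R$.
   Context: An element $a$ of a ring $A$ is complemented if there is $b\in A$ with $ab=0$ and $a+b$ a regular element (non-zero-divisor) of $A$; $A$ is complemented if every element is complemented. An ideal is dense if its annihilator is zero. *)

theory Defs
  imports "HOL-Computational_Algebra.Formal_Power_Series" "HOL-Library.Countable_Set"
begin

definition regular_elem :: "'a::comm_ring_1 \<Rightarrow> bool" where
  "regular_elem x \<longleftrightarrow> (\<forall>c. x * c = 0 \<longrightarrow> c = 0)"

definition complemented_elem :: "'a::comm_ring_1 \<Rightarrow> bool" where
  "complemented_elem a \<longleftrightarrow> (\<exists>b. a * b = 0 \<and> regular_elem (a + b))"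

definition complemented_ring :: "'a::comm_ring_1 itself \<Rightarrow> bool" where
  "complemented_ring _ \<longleftrightarrow> (\<forall>a::'a. complemented_elem a)"

definition reduced_ring :: "'a::comm_ring_1 itself \<Rightarrow> bool" where
  "reduced_ring _ \<longleftrightarrow> (\<forall>(a::'a) (n::nat). a ^ n = 0 \<longrightarrow> a = 0)"

definition gen_ideal :: "'a::comm_ring_1 set \<Rightarrow> 'a set" where
  "gen_ideal S = {x. \<exists>F c. finite F \<and> F \<subseteq> S \<and> x = (\<Sum>s\<in>F. c s * s)}"

definition countably_generated_ideal :: "'a::comm_ring_1 set \<Rightarrow> bool" where
  "countably_generated_ideal I \<longleftrightarrow> (\<exists>S. countable S \<and> I = gen_ideal S)"

definition ideal_sum :: "'a::comm_ring_1 set \<Rightarrow> 'a set \<Rightarrow> 'a set" where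
  "ideal_sum I J = {i + j | i j. i \<in> I \<and> j \<in> J}"

definition ideal_prod :: "'a::comm_ring_1 set \<Rightarrow> 'a set \<Rightarrow> 'a set" where
  "ideal_prod I J = gen_ideal {i * j | i j. i \<in> I \<and> j \<in> J}"

definition annihilator :: "'a::comm_ring_1 set \<Rightarrow> 'a set" where
  "annihilator I = {r. \<forall>x\<in>I. r * x = 0}"

definition dense_ideal :: "'a::comm_ring_1 set \<Rightarrow> bool" where
  "dense_ideal I \<longleftrightarrow> annihilator I = {0}"

end

theory Submission
  imports Defs
begin

unbundle fps_syntax

text \<open>Over a reduced ring \<open>R\<close>, \<open>f g = 0\<close> in \<open>R[[x]]\<close> forces \<open>f\<^sub>i g\<^sub>j = 0\<close> for all \<open>i, j\<close>, and
  a constant \<open>r\<close> annihilates \<open>f\<close> iff it annihilates the ideal generated by the coefficients of \<open>f\<close>.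
  Hence a complement \<open>g\<close> of \<open>f\<close> in \<open>R[[x]]\<close> is the same as a series whose coefficient ideal
  annihilates that of \<open>f\<close> and such that the two coefficient ideals together have zero annihilator.
  Coefficient ideals of power series are exactly the countably generated ideals, which gives the
  criterion; reducedness is necessary because every complemented ring is reduced and \<open>R\<close> is a
  subring of \<open>R[[x]]\<close>.\<close>

lemma reduced_ring_iff_square_eq_0:
  "reduced_ring TYPE('a::comm_ring_1) \<longleftrightarrow> (\<forall>b::'a. b\<^sup>2 = 0 \<longrightarrow> b = 0)"
proof
  assume "\<forall>b::'a. b\<^sup>2 = 0 \<longrightarrow> b = 0"
  then have nil: "a = 0" if "a ^ Suc n = 0" for a :: 'a and n
    using that
  proof (induction n)
    case 0
    then show ?case by simp
  next
    case (Suc n)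
    have "(a ^ Suc n)\<^sup>2 = a ^ Suc (Suc n) * a ^ n"
      by (simp add: power2_eq_square flip: power_add)
    then show ?case using Suc by simp
  qed
  show "reduced_ring TYPE('a)"
    unfolding reduced_ring_def
  proof (intro allI impI)
    fix a :: 'a and n assume "a ^ n = 0"
    then show "a = 0"
    proof (cases n)
      case 0
      then have "(1::'a) = 0" using \<open>a ^ n = 0\<close> by simp
      then show ?thesis by (metis mult_1_right mult_zero_right)
    qed (auto intro: nil)
  qed
qed (auto simp: reduced_ring_def)

lemma complemented_ring_imp_reduced:
  assumes "complemented_ring TYPE('a::comm_ring_1)"
  shows "reduced_ring TYPE('a)"
  unfolding reduced_ring_iff_square_eq_0
proof (intro allI impI)
  fix a :: 'a assume "a\<^sup>2 = 0"
  obtain b where "a * b = 0" "regular_elem (a + b)"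
    using assms unfolding complemented_ring_def complemented_elem_def by blast
  moreover from \<open>a * b = 0\<close> \<open>a\<^sup>2 = 0\<close> have "(a + b) * a = 0"
    by (simp add: algebra_simps power2_eq_square)
  ultimately show "a = 0" unfolding regular_elem_def by blast
qed

lemma reduced_fps_imp_reduced:
  assumes "reduced_ring TYPE('a::comm_ring_1 fps)"
  shows "reduced_ring TYPE('a)"
  using assms unfolding reduced_ring_def
  by (metis fps_const_eq_0_iff fps_const_power)

lemma reduced_annihilates_orthogonal_summand:
  fixes a b r :: "'a::comm_ring_1"
  assumes "reduced_ring TYPE('a)" "a * b = 0" "(a + b) * r = 0"
  shows "a * r = 0"
proof -
  have "(a * r)\<^sup>2 = a * ((a + b) * r) * r - (a * b) * r * r"
    by (simp add: power2_eq_square algebra_simps)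
  also have "\<dots> = 0" using assms(2,3) by simp
  finally show ?thesis using assms(1) unfolding reduced_ring_iff_square_eq_0 by blast
qed

lemma fps_mult_eq_0_imp_const_nth0_mult_eq_0:
  fixes f g :: "'a::comm_ring_1 fps"
  assumes "reduced_ring TYPE('a)" "f * g = 0"
  shows "fps_const (f $ 0) * g = 0"
proof -
  have "f $ 0 * g $ n = 0" for n
  proof (induction n rule: less_induct)
    case (less n)
    have "0 = f $ 0 * (f * g) $ n" using assms(2) by simp
    also have "\<dots> = (\<Sum>i=0..n. f $ i * (f $ 0 * g $ (n - i)))"
      by (simp add: fps_mult_nth sum_distrib_left mult.left_commute)
    also have "\<dots> = f $ 0 * (f $ 0 * g $ n)"
      using less.IH by (subst sum.atLeast_Suc_atMost) (auto intro!: sum.neutral)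
    finally have "(f $ 0 * g $ n)\<^sup>2 = 0"
      by (simp add: power2_eq_square) (metis mult.assoc mult.left_commute mult_zero_left)
    then show ?case using assms(1) unfolding reduced_ring_iff_square_eq_0 by blast
  qed
  then show ?thesis by (simp add: fps_eq_iff)
qed

lemma fps_mult_eq_0_imp_nth_mult_eq_0:
  fixes f g :: "'a::comm_ring_1 fps"
  assumes "reduced_ring TYPE('a)" "f * g = 0"
  shows "f $ i * g $ j = 0"
  using assms(2)
proof (induction i arbitrary: f)
  case 0
  then have "(fps_const (f $ 0) * g) $ j = 0"
    using assms(1) fps_mult_eq_0_imp_const_nth0_mult_eq_0 by (metis fps_zero_nth)
  then show ?case by simp
next
  case (Suc i)
  have "f = fps_const (f $ 0) + fps_X * fps_shift 1 f"
    by (rule fps_ext) simp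
  then have "fps_X * (fps_shift 1 f * g) = 0"
    using Suc.prems fps_mult_eq_0_imp_const_nth0_mult_eq_0[OF assms(1) Suc.prems]
    by (metis add_0 distrib_right mult.assoc)
  then have "fps_shift 1 f * g = 0"
    by (metis fps_ext fps_X_mult_nth fps_zero_nth diff_Suc_1 nat.distinct(1))
  then show ?case using Suc.IH by fastforce
qed

lemma nth_mult_eq_0_imp_fps_mult_eq_0:
  fixes f g :: "'a::comm_ring_1 fps"
  assumes "\<And>i j. f $ i * g $ j = 0"
  shows "f * g = 0"
  by (simp add: fps_eq_iff fps_mult_nth assms)

lemma gen_ideal_superset: "S \<subseteq> gen_ideal S"
proof
  fix s assume "s \<in> S"
  then show "s \<in> gen_ideal S"
    unfolding gen_ideal_def by (intro CollectI exI[of _ "{s}"] exI[of _ "\<lambda>_. 1"]) auto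
qed

lemma zero_in_gen_ideal: "0 \<in> gen_ideal S"
  unfolding gen_ideal_def by (intro CollectI exI[of _ "{}"]) auto

lemma annihilator_gen_ideal: "annihilator (gen_ideal S) = annihilator S"
proof
  show "annihilator (gen_ideal S) \<subseteq> annihilator S"
    using gen_ideal_superset unfolding annihilator_def by blast
  show "annihilator S \<subseteq> annihilator (gen_ideal S)"
    unfolding annihilator_def
  proof (intro subsetI CollectI ballI)
    fix r x assume r: "r \<in> {r. \<forall>s\<in>S. r * s = 0}" and "x \<in> gen_ideal S"
    then obtain F c where F: "F \<subseteq> S" and x: "x = (\<Sum>s\<in>F. c s * s)"
      unfolding gen_ideal_def by blast
    have "r * x = (\<Sum>s\<in>F. c s * (r * s))"
      by (simp add: x sum_distrib_left mult.left_commute)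
    also have "\<dots> = 0" using F r by (intro sum.neutral) auto
    finally show "r * x = 0" .
  qed
qed

lemma gen_ideal_insert_0: "gen_ideal (insert 0 S) = gen_ideal S"
proof
  show "gen_ideal (insert 0 S) \<subseteq> gen_ideal S"
  proof
    fix x assume "x \<in> gen_ideal (insert 0 S)"
    then obtain F c where "finite F" "F \<subseteq> insert 0 S" "x = (\<Sum>s\<in>F. c s * s)"
      unfolding gen_ideal_def by blast
    moreover from \<open>finite F\<close> have "(\<Sum>s\<in>F. c s * s) = (\<Sum>s\<in>F - {0}. c s * s)"
      by (intro sum.mono_neutral_right) auto
    ultimately show "x \<in> gen_ideal S"
      unfolding gen_ideal_def by (intro CollectI exI[of _ "F - {0}"] exI[of _ c]) auto
  qed
  show "gen_ideal S \<subseteq> gen_ideal (insert 0 S)"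
  proof
    fix x assume "x \<in> gen_ideal S"
    then obtain F c where "finite F" "F \<subseteq> S" "x = (\<Sum>s\<in>F. c s * s)"
      unfolding gen_ideal_def by blast
    then show "x \<in> gen_ideal (insert 0 S)"
      unfolding gen_ideal_def by (intro CollectI exI[of _ F] exI[of _ c]) auto
  qed
qed

lemma ideal_prod_eq_0_iff:
  "ideal_prod I J = {0} \<longleftrightarrow> (\<forall>i\<in>I. \<forall>j\<in>J. i * j = 0)"
proof
  assume prod: "ideal_prod I J = {0}"
  show "\<forall>i\<in>I. \<forall>j\<in>J. i * j = 0"
  proof (intro ballI)
    fix i j assume "i \<in> I" "j \<in> J"
    then have "i * j \<in> {i * j |i j. i \<in> I \<and> j \<in> J}" by blast
    then have "i * j \<in> ideal_prod I J"
      unfolding ideal_prod_def using gen_ideal_superset by (rule subsetD[rotated])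
    then show "i * j = 0" using prod by simp
  qed
next
  assume "\<forall>i\<in>I. \<forall>j\<in>J. i * j = 0"
  then have "1 \<in> annihilator (ideal_prod I J)"
    unfolding ideal_prod_def annihilator_gen_ideal by (auto simp: annihilator_def)
  then show "ideal_prod I J = {0}"
    using zero_in_gen_ideal unfolding ideal_prod_def annihilator_def by auto
qed

lemma annihilator_ideal_sum:
  assumes "0 \<in> I" "0 \<in> J"
  shows "annihilator (ideal_sum I J) = annihilator I \<inter> annihilator J"
proof
  show "annihilator (ideal_sum I J) \<subseteq> annihilator I \<inter> annihilator J"
  proof
    fix r assume r: "r \<in> annihilator (ideal_sum I J)"
    have "x + 0 \<in> ideal_sum I J" "0 + y \<in> ideal_sum I J" if "x \<in> I" "y \<in> J" for x y
      using that assms unfolding ideal_sum_def by blast+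
    then show "r \<in> annihilator I \<inter> annihilator J"
      using r assms unfolding annihilator_def by fastforce
  qed
  show "annihilator I \<inter> annihilator J \<subseteq> annihilator (ideal_sum I J)"
    unfolding annihilator_def ideal_sum_def by (auto simp: distrib_left)
qed

definition content_ideal :: "'a::comm_ring_1 fps \<Rightarrow> 'a set" where
  "content_ideal f = gen_ideal (range (fps_nth f))"

lemma countably_generated_ideal_iff_content_ideal:
  "countably_generated_ideal I \<longleftrightarrow> (\<exists>f::'a::comm_ring_1 fps. I = content_ideal f)"
proof
  assume "countably_generated_ideal I"
  then obtain S where "countable S" "I = gen_ideal S"
    unfolding countably_generated_ideal_def by blast
  \<comment> \<open>\<open>from_nat_into\<close> only enumerates nonempty sets, and adding \<open>0\<close> does not change the ideal.\<close>
  then have "I = content_ideal (Abs_fps (from_nat_into (insert 0 S)))"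
    by (simp add: content_ideal_def gen_ideal_insert_0)
  then show "\<exists>f::'a fps. I = content_ideal f" by blast
next
  assume "\<exists>f::'a fps. I = content_ideal f"
  then obtain f :: "'a fps" where "I = content_ideal f" by blast
  then show "countably_generated_ideal I"
    unfolding countably_generated_ideal_def content_ideal_def
    by (intro exI[of _ "range (fps_nth f)"]) simp
qed

lemma annihilator_content_ideal: "annihilator (content_ideal f) = {r. fps_const r * f = 0}"
  unfolding content_ideal_def annihilator_gen_ideal by (auto simp: annihilator_def fps_eq_iff)

lemma ideal_prod_content_ideal_eq_0_iff:
  "ideal_prod (content_ideal f) (content_ideal g) = {0} \<longleftrightarrow> (\<forall>i j. f $ i * g $ j = 0)"
proof
  assume "ideal_prod (content_ideal f) (content_ideal g) = {0}"
  then show "\<forall>i j. f $ i * g $ j = 0"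
    using gen_ideal_superset unfolding ideal_prod_eq_0_iff content_ideal_def by blast
next
  assume orth: "\<forall>i j. f $ i * g $ j = 0"
  have "x * y = 0" if "x \<in> content_ideal f" "y \<in> content_ideal g" for x y
  proof -
    have "g $ j \<in> annihilator (content_ideal f)" for j
      using orth by (simp add: annihilator_content_ideal fps_eq_iff mult.commute)
    then have "x * g $ j = 0" for j
      using that(1) unfolding annihilator_def by (simp add: mult.commute)
    then have "x \<in> annihilator (content_ideal g)"
      unfolding content_ideal_def annihilator_gen_ideal by (auto simp: annihilator_def)
    then show ?thesis using that(2) unfolding annihilator_def by blast
  qed
  then show "ideal_prod (content_ideal f) (content_ideal g) = {0}"
    unfolding ideal_prod_eq_0_iff by blast
qed

lemma annihilator_content_ideal_sum:
  "annihilator (ideal_sum (content_ideal f) (content_ideal g)) =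
    {r. fps_const r * f = 0 \<and> fps_const r * g = 0}"
proof -
  have "0 \<in> content_ideal h" for h :: "'a fps"
    by (simp add: content_ideal_def zero_in_gen_ideal)
  then show ?thesis by (auto simp: annihilator_ideal_sum annihilator_content_ideal)
qed

lemma complemented_fps_imp_dense_complement:
  fixes I :: "'a::comm_ring_1 set"
  assumes "complemented_ring TYPE('a fps)" "countably_generated_ideal I"
  shows "\<exists>J. countably_generated_ideal J \<and> ideal_prod I J = {0} \<and> dense_ideal (ideal_sum I J)"
proof -
  obtain f :: "'a fps" where I: "I = content_ideal f"
    using assms(2) countably_generated_ideal_iff_content_ideal by blast
  obtain g where "f * g = 0" and reg: "regular_elem (f + g)"
    using assms(1) unfolding complemented_ring_def complemented_elem_def by blast
  moreover have "reduced_ring TYPE('a)"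
    using assms(1) complemented_ring_imp_reduced reduced_fps_imp_reduced by blast
  ultimately have "ideal_prod I (content_ideal g) = {0}"
    unfolding I ideal_prod_content_ideal_eq_0_iff using fps_mult_eq_0_imp_nth_mult_eq_0 by blast
  moreover have "dense_ideal (ideal_sum I (content_ideal g))"
    unfolding dense_ideal_def I annihilator_content_ideal_sum
  proof safe
    fix r assume "fps_const r * f = 0" "fps_const r * g = 0"
    then have "(f + g) * fps_const r = 0" by (simp add: algebra_simps)
    then show "r = 0" using reg unfolding regular_elem_def by (metis fps_const_eq_0_iff)
  qed auto
  ultimately show ?thesis
    using countably_generated_ideal_iff_content_ideal by blast
qed

lemma dense_complement_imp_complemented_fps:
  assumes reduced: "reduced_ring TYPE('a::comm_ring_1)"
    and dense_complement: "\<And>I::'a set. countably_generated_ideal I \<Longrightarrow>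
      \<exists>J. countably_generated_ideal J \<and> ideal_prod I J = {0} \<and> dense_ideal (ideal_sum I J)"
  shows "complemented_ring TYPE('a fps)"
  unfolding complemented_ring_def complemented_elem_def
proof
  fix f :: "'a fps"
  obtain g :: "'a fps" where prod: "ideal_prod (content_ideal f) (content_ideal g) = {0}"
    and dense: "dense_ideal (ideal_sum (content_ideal f) (content_ideal g))"
    using dense_complement[of "content_ideal f"] countably_generated_ideal_iff_content_ideal
    by metis
  have orth: "f $ i * g $ j = 0" for i j
    using prod ideal_prod_content_ideal_eq_0_iff by blast
  have "regular_elem (f + g)"
    unfolding regular_elem_def
  proof (intro allI impI)
    fix h assume "(f + g) * h = 0"
    then have "(f $ i + g $ i) * h $ j = 0" for i j
      using fps_mult_eq_0_imp_nth_mult_eq_0[OF reduced] by (metis fps_add_nth)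
    then have "f $ i * h $ j = 0" "g $ i * h $ j = 0" for i j
      using reduced_annihilates_orthogonal_summand[OF reduced] orth[of i i]
      by (metis add.commute mult.commute)+
    then have "h $ j \<in> annihilator (ideal_sum (content_ideal f) (content_ideal g))" for j
      by (simp add: annihilator_content_ideal_sum fps_eq_iff mult.commute)
    then show "h = 0" using dense by (simp add: dense_ideal_def fps_eq_iff)
  qed
  then show "\<exists>g. f * g = 0 \<and> regular_elem (f + g)"
    using orth nth_mult_eq_0_imp_fps_mult_eq_0 by blast
qed

theorem mainTheorem3:
  shows "complemented_ring TYPE('a::comm_ring_1 fps) \<longleftrightarrow>
    (reduced_ring TYPE('a) \<and>
     (\<forall>I::'a set. countably_generated_ideal I \<longrightarrow>
        (\<exists>J. countably_generated_ideal J \<and> ideal_prod I J = {0} \<and>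
             dense_ideal (ideal_sum I J))))"
  using complemented_ring_imp_reduced reduced_fps_imp_reduced
    complemented_fps_imp_dense_complement dense_complement_imp_complemented_fps
  by blast

end
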